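(* Let $ABCD$ be a convex quadrilateral in which no two opposite sides are parallel, and let $\omega_1$ be the circle with center $I_1$ and radius $r_1$ (so $\omega_1$ is tangent to the lines $AB$ and $CD$). If $\omega_1$ is also tangent to line $BC$ or to line $DA$, then $\omega_1$ is tangent to all four lines $AB,BC,CD,DA$ (so that $ABCD$ is tangential to $\omega_1$). Analogously, if the circle $\omega_2$ with center $I_2$ and radius $r_2$ is tangent to line $AB$ or line $CD$ in addition to lines $BC$ and $DA$, then $\omega_2$ is tangent to all four side lines.
   Context: Let $E$ be the intersection point of lines $AB$ and $DC$, and $F$ the intersection point of lines $AD$ and $BC$. Let $M,N$ be the midpoints of the diagonals $AC$ and $BD$; the line $MN$ is the Newton line. $I_1$ is the intersection point of the bisector line of the angle $\angle AED$ (the angle at $E$ between rays $EA$ and $ED$) with the line $MN$, and $r_1$ is the common distance from $I_1$ to the lines $AB$ and $CD$. $I_2$ is the intersection point of the bisector line of the angle $\angle AFB$ (the angle at $F$ between rays $FA$ and $FB$) with the line $MN$, and $r_2$ is the common distance from $I_2$ to the lines $BC$ and $DA$. It is assumed these intersections are single points. *)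

theory Defs
  imports "HOL-Analysis.Analysis"
begin

definition cross2 :: "real^2 \<Rightarrow> real^2 \<Rightarrow> real" where
  "cross2 u v = u$1 * v$2 - u$2 * v$1"

definition line :: "real^2 \<Rightarrow> real^2 \<Rightarrow> (real^2) set" where
  "line P Q = {P + t *\<^sub>R (Q - P) | t. True}"

definition convex_quadrilateral :: "real^2 \<Rightarrow> real^2 \<Rightarrow> real^2 \<Rightarrow> real^2 \<Rightarrow> bool" where
  "convex_quadrilateral A B C D \<longleftrightarrow>
     (cross2 (B - A) (C - B) > 0 \<and> cross2 (C - B) (D - C) > 0 \<and>
      cross2 (D - C) (A - D) > 0 \<and> cross2 (A - D) (B - A) > 0) \<or>
     (cross2 (B - A) (C - B) < 0 \<and> cross2 (C - B) (D - C) < 0 \<and>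
      cross2 (D - C) (A - D) < 0 \<and> cross2 (A - D) (B - A) < 0)"

definition parallel_lines :: "real^2 \<Rightarrow> real^2 \<Rightarrow> real^2 \<Rightarrow> real^2 \<Rightarrow> bool" where
  "parallel_lines P Q R S \<longleftrightarrow> cross2 (Q - P) (S - R) = 0"

definition angle_bisector_line :: "real^2 \<Rightarrow> real^2 \<Rightarrow> real^2 \<Rightarrow> (real^2) set" where
  "angle_bisector_line X V Y =
     {V + t *\<^sub>R ((1 / norm (X - V)) *\<^sub>R (X - V) + (1 / norm (Y - V)) *\<^sub>R (Y - V)) | t. True}"

definition tangent_to_line :: "real^2 \<Rightarrow> real \<Rightarrow> (real^2) set \<Rightarrow> bool" where
  "tangent_to_line c r L \<longleftrightarrow> (\<exists>!p. p \<in> L \<and> p \<in> sphere c r)"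

end

theory Submission
  imports Defs
begin

(*
  Every point of the bisector at E is equidistant from AB and CD, so \<omega>1 always touches these
  two lines.  Take unit vectors p, q along EA, ED and write A, B, C, D = E + a p, E + b p,
  E + c q, E + d q and I1 = E + t (p + q).  The circle about I1 touching AB and CD touches the line
  through E + \<beta> p and E + \<gamma> q iff  \<beta>\<gamma> - 2t(\<beta> + \<gamma>) + 2t\<^sup>2(1 + p\<bullet>q) = 0.  For I1 on the Newton line
  the signed-area identity [ABI] + [CDI] = [BCI] + [DAI] says exactly that this expression takes the same
  value at (b, c) and at (a, d), i.e. at BC and at DA.  The statement about \<omega>2 is the same fact
  for the quadrilateral BCDA.
*)

lemma power2_norm_vec2: "(norm (x::real^2))\<^sup>2 = (x$1)\<^sup>2 + (x$2)\<^sup>2"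
  by (simp add: norm_vec_def L2_set_def sum_2)

lemma inner_vec2: "(x::real^2) \<bullet> y = x$1 * y$1 + x$2 * y$2"
  by (simp add: inner_vec_def sum_2)

lemma line_commute: "line P Q = line Q P"
proof -
  have "line P Q \<subseteq> line Q P" for P Q :: "real^2"
  proof
    fix X assume "X \<in> line P Q"
    then obtain t where "X = P + t *\<^sub>R (Q - P)" unfolding line_def by blast
    then have "X = Q + (1 - t) *\<^sub>R (P - Q)" by (simp add: algebra_simps)
    then show "X \<in> line Q P" unfolding line_def by blast
  qed
  then show ?thesis by blast
qed

lemma angle_bisector_line_commute: "angle_bisector_line X V Y = angle_bisector_line Y V X"
  unfolding angle_bisector_line_def by (simp add: add.commute)

lemma cross2_in_line:
  assumes "X \<in> line P Q" shows "cross2 (Q - P) (X - P) = 0"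
proof -
  obtain t where X: "X = P + t *\<^sub>R (Q - P)" using assms unfolding line_def by blast
  show ?thesis unfolding X by (simp add: cross2_def algebra_simps)
qed

lemma in_line_swap:
  assumes "E \<in> line A B" "E \<noteq> A" shows "B \<in> line E A"
proof -
  obtain e where "E = A + e *\<^sub>R (B - A)" using assms(1) unfolding line_def by blast
  then have e: "E - A = e *\<^sub>R (B - A)" by simp
  with assms(2) have "e \<noteq> 0" by auto
  with e have "B - A = (1 / e) *\<^sub>R (E - A)" by simp
  then have "B = E + (1 - 1 / e) *\<^sub>R (A - E)" by (simp add: algebra_simps)
  then show ?thesis unfolding line_def by blast
qed

lemma quadratic_unique_root_iff:
  fixes a b c :: real
  assumes a: "a > 0"
  shows "(\<exists>!t. a * t\<^sup>2 + b * t + c = 0) \<longleftrightarrow> b\<^sup>2 = 4 * a * c"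
proof
  assume unique: "\<exists>!t. a * t\<^sup>2 + b * t + c = 0"
  then obtain t0 where t0: "a * t0\<^sup>2 + b * t0 + c = 0" by blast
  have "a * (- b / a - t0)\<^sup>2 + b * (- b / a - t0) + c = a * t0\<^sup>2 + b * t0 + c"
    using a by (simp add: field_simps power2_eq_square)
  also have "\<dots> = 0" by (fact t0)
  finally have "a * (- b / a - t0)\<^sup>2 + b * (- b / a - t0) + c = 0" .
  with unique t0 have "- b / a - t0 = t0" by blast
  then have "t0 = - b / (2 * a)" using a by (simp add: field_simps)
  with t0 a show "b\<^sup>2 = 4 * a * c" by (simp add: field_simps power2_eq_square)
next
  assume discr: "b\<^sup>2 = 4 * a * c"
  have square: "a * t\<^sup>2 + b * t + c = a * (t + b / (2 * a))\<^sup>2" for t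
    using a discr by (simp add: field_simps power2_eq_square)
  show "\<exists>!t. a * t\<^sup>2 + b * t + c = 0"
  proof
    show "a * (- b / (2 * a))\<^sup>2 + b * (- b / (2 * a)) + c = 0"
      unfolding square using a by simp
  next
    fix t
    assume "a * t\<^sup>2 + b * t + c = 0"
    then show "t = - b / (2 * a)"
      unfolding square using a by simp
  qed
qed

lemma tangent_to_line_iff_cross2:
  fixes P Q c :: "real^2"
  assumes "P \<noteq> Q" and "r \<ge> 0"
  shows "tangent_to_line c r (line P Q) \<longleftrightarrow> (cross2 (Q - P) (c - P))\<^sup>2 = r\<^sup>2 * (norm (Q - P))\<^sup>2"
proof -
  define d where "d = Q - P"
  define a where "a = (norm d)\<^sup>2"
  define b where "b = 2 * (d \<bullet> (P - c))"
  define k where "k = (norm (P - c))\<^sup>2 - r\<^sup>2"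
  have "a > 0" using assms(1) unfolding a_def d_def by simp
  have "inj (\<lambda>t. P + t *\<^sub>R d)"
    using \<open>P \<noteq> Q\<close> unfolding d_def by (auto simp: inj_def)
  then have "tangent_to_line c r (line P Q) \<longleftrightarrow> (\<exists>!t. P + t *\<^sub>R d \<in> sphere c r)"
    unfolding tangent_to_line_def line_def d_def[symmetric] inj_def by blast
  also have "\<dots> \<longleftrightarrow> (\<exists>!t. a * t\<^sup>2 + b * t + k = 0)"
  proof -
    have "P + t *\<^sub>R d \<in> sphere c r \<longleftrightarrow> a * t\<^sup>2 + b * t + k = 0" for t
    proof -
      have "(norm (P + t *\<^sub>R d - c))\<^sup>2 - r\<^sup>2 = a * t\<^sup>2 + b * t + k"
        unfolding a_def b_def k_def power2_norm_vec2 inner_vec2 by simp algebra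
      moreover have "P + t *\<^sub>R d \<in> sphere c r \<longleftrightarrow> (norm (P + t *\<^sub>R d - c))\<^sup>2 = r\<^sup>2"
        using \<open>r \<ge> 0\<close> by (auto simp: dist_norm norm_minus_commute)
      ultimately show ?thesis by linarith
    qed
    then show ?thesis by simp
  qed
  also have "\<dots> \<longleftrightarrow> b\<^sup>2 = 4 * a * k"
    using quadratic_unique_root_iff[OF \<open>a > 0\<close>] .
  also have "\<dots> \<longleftrightarrow> (cross2 d (c - P))\<^sup>2 = r\<^sup>2 * a"
  proof -
    have "b\<^sup>2 - 4 * a * k = 4 * (r\<^sup>2 * a - (cross2 d (c - P))\<^sup>2)"
      unfolding a_def b_def k_def cross2_def power2_norm_vec2 inner_vec2 by simp algebra
    then show ?thesis by (smt (verit))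
  qed
  finally show ?thesis unfolding a_def d_def .
qed

lemma infdist_line:
  fixes P Q c :: "real^2"
  assumes "P \<noteq> Q"
  shows "infdist c (line P Q) = \<bar>cross2 (Q - P) (c - P)\<bar> / norm (Q - P)"
proof -
  define d where "d = Q - P"
  define \<delta> where "\<delta> = \<bar>cross2 d (c - P)\<bar> / norm d"
  have "norm d > 0" using assms by (simp add: d_def)
  have dist_sq: "(norm d * dist c (P + t *\<^sub>R d))\<^sup>2 = ((norm d)\<^sup>2 * t + d \<bullet> (P - c))\<^sup>2 + (cross2 d (c - P))\<^sup>2"
    for t
    unfolding dist_norm power_mult_distrib power2_norm_vec2 inner_vec2 cross2_def by simp algebra
  have "\<bar>cross2 d (c - P)\<bar> \<le> \<bar>norm d * dist c (P + t *\<^sub>R d)\<bar>" for t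
    unfolding abs_le_square_iff dist_sq by simp
  then have lower: "\<delta> \<le> dist c (P + t *\<^sub>R d)" for t
    using \<open>norm d > 0\<close> by (simp add: \<delta>_def divide_le_eq mult.commute)
  define t0 where "t0 = - (d \<bullet> (P - c)) / (norm d)\<^sup>2"
  have "(norm d * dist c (P + t0 *\<^sub>R d))\<^sup>2 = (\<bar>cross2 d (c - P)\<bar>)\<^sup>2"
    using dist_sq[of t0] \<open>norm d > 0\<close> by (simp add: t0_def)
  then have "norm d * dist c (P + t0 *\<^sub>R d) = \<bar>cross2 d (c - P)\<bar>"
    by (metis abs_ge_zero norm_ge_zero power2_abs power2_eq_iff_nonneg zero_le_dist zero_le_mult_iff)
  then have attained: "dist c (P + t0 *\<^sub>R d) = \<delta>"
    using \<open>norm d > 0\<close> by (simp add: \<delta>_def eq_divide_eq mult.commute)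
  have "infdist c (line P Q) = \<delta>"
  proof (rule antisym)
    have "P + t0 *\<^sub>R d \<in> line P Q" unfolding line_def d_def by blast
    then show "infdist c (line P Q) \<le> \<delta>"
      using infdist_le attained by metis
    have "line P Q \<noteq> {}" unfolding line_def by blast
    with lower show "\<delta> \<le> infdist c (line P Q)"
      unfolding infdist_notempty[OF \<open>line P Q \<noteq> {}\<close>]
      by (intro cINF_greatest) (auto simp: line_def d_def)
  qed
  then show ?thesis unfolding \<delta>_def d_def .
qed

lemma infdist_line_eq_iff:
  fixes P Q c :: "real^2"
  assumes "P \<noteq> Q" and "r \<ge> 0"
  shows "infdist c (line P Q) = r \<longleftrightarrow> (cross2 (Q - P) (c - P))\<^sup>2 = r\<^sup>2 * (norm (Q - P))\<^sup>2"
proof -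
  have "norm (Q - P) > 0" using assms(1) by simp
  then have "infdist c (line P Q) = r \<longleftrightarrow> \<bar>cross2 (Q - P) (c - P)\<bar> = r * norm (Q - P)"
    unfolding infdist_line[OF assms(1)] by (auto simp: divide_eq_eq)
  also have "\<dots> \<longleftrightarrow> \<bar>cross2 (Q - P) (c - P)\<bar>\<^sup>2 = (r * norm (Q - P))\<^sup>2"
    using \<open>r \<ge> 0\<close> by (intro power2_eq_iff_nonneg[symmetric]) auto
  finally show ?thesis
    by (simp add: power_mult_distrib)
qed

lemma tangent_to_line_iff_infdist:
  fixes P Q c :: "real^2"
  assumes "P \<noteq> Q" and "r \<ge> 0"
  shows "tangent_to_line c r (line P Q) \<longleftrightarrow> infdist c (line P Q) = r"
  using tangent_to_line_iff_cross2[OF assms] infdist_line_eq_iff[OF assms] by simp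

lemma infdist_bisector_point_to_side:
  fixes E p q :: "real^2"
  assumes "norm p = 1" and "\<alpha> \<noteq> \<beta>"
  shows "infdist (E + t *\<^sub>R (p + q)) (line (E + \<alpha> *\<^sub>R p) (E + \<beta> *\<^sub>R p)) = \<bar>t * cross2 p q\<bar>"
proof -
  have "E + \<alpha> *\<^sub>R p \<noteq> E + \<beta> *\<^sub>R p"
    using assms by (metis add_left_cancel norm_zero scaleR_right_imp_eq zero_neq_one)
  moreover have "cross2 (E + \<beta> *\<^sub>R p - (E + \<alpha> *\<^sub>R p)) (E + t *\<^sub>R (p + q) - (E + \<alpha> *\<^sub>R p))
      = (\<beta> - \<alpha>) * (t * cross2 p q)"
    by (simp add: cross2_def algebra_simps)
  moreover have "norm (E + \<beta> *\<^sub>R p - (E + \<alpha> *\<^sub>R p)) = \<bar>\<beta> - \<alpha>\<bar>"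
    using \<open>norm p = 1\<close> by (simp flip: scaleR_diff_left)
  ultimately show ?thesis
    using \<open>\<alpha> \<noteq> \<beta>\<close> by (simp add: infdist_line abs_mult)
qed

lemma infdist_bisector_point_to_transversal_iff:
  fixes E p q :: "real^2"
  assumes p: "norm p = 1" and q: "norm q = 1" and pq: "cross2 p q \<noteq> 0"
    and "\<beta> \<noteq> 0" and "\<gamma> \<noteq> 0"
  shows "infdist (E + t *\<^sub>R (p + q)) (line (E + \<beta> *\<^sub>R p) (E + \<gamma> *\<^sub>R q)) = \<bar>t * cross2 p q\<bar>
     \<longleftrightarrow> \<beta> * \<gamma> - 2 * t * (\<beta> + \<gamma>) + 2 * t\<^sup>2 * (1 + p \<bullet> q) = 0"
proof -
  define P where "P = E + \<beta> *\<^sub>R p"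
  define Q where "Q = E + \<gamma> *\<^sub>R q"
  define k where "k = cross2 (Q - P) (E + t *\<^sub>R (p + q) - P)"
  have "P \<noteq> Q"
  proof
    assume "P = Q"
    then have "cross2 (\<beta> *\<^sub>R p) q = cross2 (\<gamma> *\<^sub>R q) q" by (simp add: P_def Q_def)
    with pq \<open>\<beta> \<noteq> 0\<close> show False by (simp add: cross2_def algebra_simps)
  qed
  have p1: "(p$1)\<^sup>2 + (p$2)\<^sup>2 = 1" and q1: "(q$1)\<^sup>2 + (q$2)\<^sup>2 = 1"
    using p q by (simp_all flip: power2_norm_vec2)
  have "k\<^sup>2 - \<bar>t * cross2 p q\<bar>\<^sup>2 * (norm (Q - P))\<^sup>2
      = (cross2 p q)\<^sup>2 * \<beta> * \<gamma> * (\<beta> * \<gamma> - 2 * t * (\<beta> + \<gamma>) + 2 * t\<^sup>2 * (1 + p \<bullet> q))"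
    using p1 q1 unfolding k_def P_def Q_def power2_norm_vec2 inner_vec2 cross2_def power2_abs
    by simp algebra
  with pq \<open>\<beta> \<noteq> 0\<close> \<open>\<gamma> \<noteq> 0\<close> show ?thesis
    unfolding infdist_line_eq_iff[OF \<open>P \<noteq> Q\<close> abs_ge_zero] k_def P_def[symmetric] Q_def[symmetric]
    by (smt (verit) mult_eq_0_iff power_eq_0_iff)
qed

lemma cross2_Newton_line:
  assumes "I \<in> line (midpoint A C) (midpoint B D)"
  shows "cross2 (B - A) (I - A) + cross2 (D - C) (I - C) = cross2 (C - B) (I - B) + cross2 (A - D) (I - D)"
proof -
  obtain s where I: "I = midpoint A C + s *\<^sub>R (midpoint B D - midpoint A C)"
    using assms unfolding line_def by blast
  show ?thesis unfolding I midpoint_def cross2_def by (simp add: field_simps)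
qed

lemma convex_quadrilateral_side_intersection:
  assumes "convex_quadrilateral A B C D" "E \<in> line A B" "E \<in> line D C"
  shows "E \<noteq> A" "E \<noteq> B" "E \<noteq> C" "E \<noteq> D"
proof -
  have "cross2 (B - A) (C - B) \<noteq> 0" "cross2 (C - B) (D - C) \<noteq> 0"
    "cross2 (D - C) (A - D) \<noteq> 0" "cross2 (A - D) (B - A) \<noteq> 0"
    using assms(1) unfolding convex_quadrilateral_def by auto
  moreover have "cross2 (C - D) (E - D) = 0" "cross2 (B - A) (E - A) = 0"
    using assms(2,3) by (simp_all add: cross2_in_line)
  ultimately show "E \<noteq> A" "E \<noteq> B" "E \<noteq> C" "E \<noteq> D"
    by (auto simp: cross2_def algebra_simps)
qed

lemma convex_quadrilateral_bisector_frame: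
  assumes convex: "convex_quadrilateral A B C D"
    and E: "E \<in> line A B" "E \<in> line D C"
    and I: "I \<in> angle_bisector_line A E D"
  obtains p q :: "real^2" and a b c d t :: real
  where "norm p = 1" "norm q = 1" "cross2 p q \<noteq> 0"
    and "A = E + a *\<^sub>R p" "B = E + b *\<^sub>R p" "C = E + c *\<^sub>R q" "D = E + d *\<^sub>R q"
    and "I = E + t *\<^sub>R (p + q)"
    and "a \<noteq> 0" "b \<noteq> 0" "c \<noteq> 0" "d \<noteq> 0" "a \<noteq> b" "c \<noteq> d"
proof -
  have "E \<noteq> A" "E \<noteq> B" "E \<noteq> C" "E \<noteq> D"
    using convex_quadrilateral_side_intersection[OF convex E] by simp_all
  have "A \<noteq> B" "C \<noteq> D" and convex_DAB: "cross2 (A - D) (B - A) \<noteq> 0"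
    using convex unfolding convex_quadrilateral_def by (auto simp: cross2_def)
  define a d where "a = norm (A - E)" and "d = norm (D - E)"
  define p q where "p = (1 / a) *\<^sub>R (A - E)" and "q = (1 / d) *\<^sub>R (D - E)"
  have "norm p = 1" "norm q = 1" "a \<noteq> 0" "d \<noteq> 0"
    using \<open>E \<noteq> A\<close> \<open>E \<noteq> D\<close> by (simp_all add: p_def q_def a_def d_def)
  have A: "A = E + a *\<^sub>R p" and D: "D = E + d *\<^sub>R q"
    using \<open>E \<noteq> A\<close> \<open>E \<noteq> D\<close> by (simp_all add: p_def q_def a_def d_def)
  obtain \<beta> \<gamma> where "B = E + \<beta> *\<^sub>R (A - E)" "C = E + \<gamma> *\<^sub>R (D - E)"
    using in_line_swap[OF E(1) \<open>E \<noteq> A\<close>] in_line_swap[OF E(2) \<open>E \<noteq> D\<close>] unfolding line_def by blast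
  then obtain b c where B: "B = E + b *\<^sub>R p" and C: "C = E + c *\<^sub>R q"
    using A D by (metis add_diff_cancel_left' scaleR_scaleR)
  obtain t where "I = E + t *\<^sub>R (p + q)"
    using I unfolding angle_bisector_line_def p_def q_def a_def d_def by blast
  moreover have "b \<noteq> 0" "c \<noteq> 0" "a \<noteq> b" "c \<noteq> d"
    using \<open>E \<noteq> B\<close> \<open>E \<noteq> C\<close> \<open>A \<noteq> B\<close> \<open>C \<noteq> D\<close> A B C D by auto
  moreover have "cross2 (A - D) (B - A) = d * (b - a) * cross2 p q"
    unfolding A B D by (simp add: cross2_def algebra_simps)
  with convex_DAB have "cross2 p q \<noteq> 0" by auto
  ultimately show thesis
    using that \<open>norm p = 1\<close> \<open>norm q = 1\<close> A B C D \<open>a \<noteq> 0\<close> \<open>d \<noteq> 0\<close> by blast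
qed

lemma infdist_sides_from_bisector_point_on_Newton_line:
  assumes convex: "convex_quadrilateral A B C D"
    and E: "E \<in> line A B" "E \<in> line D C"
    and I: "I \<in> angle_bisector_line A E D" "I \<in> line (midpoint A C) (midpoint B D)"
  shows "infdist I (line C D) = infdist I (line A B)"
    and "infdist I (line B C) = infdist I (line A B) \<longleftrightarrow> infdist I (line D A) = infdist I (line A B)"
proof -
  obtain p q :: "real^2" and a b c d t :: real
    where unit: "norm p = 1" "norm q = 1" and pq: "cross2 p q \<noteq> 0"
      and A: "A = E + a *\<^sub>R p" and B: "B = E + b *\<^sub>R p"
      and C: "C = E + c *\<^sub>R q" and D: "D = E + d *\<^sub>R q"
      and I_eq: "I = E + t *\<^sub>R (p + q)"
      and "a \<noteq> 0" "b \<noteq> 0" "c \<noteq> 0" "d \<noteq> 0" "a \<noteq> b" "c \<noteq> d"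
    using convex_quadrilateral_bisector_frame[OF convex E I(1)] .
  have AB: "infdist I (line A B) = \<bar>t * cross2 p q\<bar>"
    unfolding A B I_eq using \<open>norm p = 1\<close> \<open>a \<noteq> b\<close> by (rule infdist_bisector_point_to_side)
  have "infdist I (line C D) = \<bar>t * cross2 q p\<bar>"
    unfolding C D I_eq add.commute[of p] using \<open>norm q = 1\<close> \<open>c \<noteq> d\<close>
    by (rule infdist_bisector_point_to_side)
  moreover have "cross2 q p = - cross2 p q" by (simp add: cross2_def)
  ultimately show "infdist I (line C D) = infdist I (line A B)"
    using AB by (simp add: abs_mult)
  define tangency_poly where
    "tangency_poly \<beta> \<gamma> = \<beta> * \<gamma> - 2 * t * (\<beta> + \<gamma>) + 2 * t\<^sup>2 * (1 + p \<bullet> q)" for \<beta> \<gamma>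
  have BC: "infdist I (line B C) = infdist I (line A B) \<longleftrightarrow> tangency_poly b c = 0"
    unfolding AB unfolding B C I_eq tangency_poly_def
    using unit pq \<open>b \<noteq> 0\<close> \<open>c \<noteq> 0\<close> by (rule infdist_bisector_point_to_transversal_iff)
  have DA: "infdist I (line D A) = infdist I (line A B) \<longleftrightarrow> tangency_poly a d = 0"
    unfolding AB line_commute[of D] unfolding A D I_eq tangency_poly_def
    using unit pq \<open>a \<noteq> 0\<close> \<open>d \<noteq> 0\<close> by (rule infdist_bisector_point_to_transversal_iff)
  have "cross2 (B - A) (I - A) + cross2 (D - C) (I - C) - cross2 (C - B) (I - B) - cross2 (A - D) (I - D)
      = cross2 p q * (tangency_poly a d - tangency_poly b c)"
    unfolding A B C D I_eq tangency_poly_def by (simp add: cross2_def algebra_simps)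
  with cross2_Newton_line[OF I(2)] pq have "tangency_poly b c = tangency_poly a d"
    by simp
  with BC DA show "infdist I (line B C) = infdist I (line A B) \<longleftrightarrow> infdist I (line D A) = infdist I (line A B)"
    by simp
qed

theorem theorem4:
  fixes A B C D E F M N I1 I2 :: "real^2" and r1 r2 :: real
  assumes convex: "convex_quadrilateral A B C D"
    and npar1: "\<not> parallel_lines A B D C"
    and npar2: "\<not> parallel_lines A D B C"
    and E: "E \<in> line A B" "E \<in> line D C"
    and F: "F \<in> line A D" "F \<in> line B C"
    and M: "M = midpoint A C"
    and N: "N = midpoint B D"
    and I1: "angle_bisector_line A E D \<inter> line M N = {I1}"
    and r1: "r1 = infdist I1 (line A B)"
    and I2: "angle_bisector_line A F B \<inter> line M N = {I2}"
    and r2: "r2 = infdist I2 (line B C)"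
  shows "(tangent_to_line I1 r1 (line B C) \<or> tangent_to_line I1 r1 (line D A) \<longrightarrow>
            tangent_to_line I1 r1 (line A B) \<and> tangent_to_line I1 r1 (line B C) \<and>
            tangent_to_line I1 r1 (line C D) \<and> tangent_to_line I1 r1 (line D A))
       \<and> (tangent_to_line I2 r2 (line A B) \<or> tangent_to_line I2 r2 (line C D) \<longrightarrow>
            tangent_to_line I2 r2 (line A B) \<and> tangent_to_line I2 r2 (line B C) \<and>
            tangent_to_line I2 r2 (line C D) \<and> tangent_to_line I2 r2 (line D A))"
proof -
  have convex': "convex_quadrilateral B C D A"
    using convex unfolding convex_quadrilateral_def by auto
  have "A \<noteq> B" "B \<noteq> C" "C \<noteq> D" "D \<noteq> A"
    using convex unfolding convex_quadrilateral_def by (auto simp: cross2_def)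
  have "r1 \<ge> 0" "r2 \<ge> 0" using r1 r2 infdist_nonneg by simp_all
  have "I1 \<in> angle_bisector_line A E D" "I1 \<in> line (midpoint A C) (midpoint B D)"
    using I1 M N by auto
  note sides1 = infdist_sides_from_bisector_point_on_Newton_line[OF convex E this]
  have "line (midpoint B D) (midpoint C A) = line M N"
    unfolding M N midpoint_sym[of C A] by (rule line_commute)
  then have "I2 \<in> angle_bisector_line B F A" "I2 \<in> line (midpoint B D) (midpoint C A)"
    using I2 angle_bisector_line_commute[of B F A] by auto
  note sides2 = infdist_sides_from_bisector_point_on_Newton_line[OF convex' F(2) F(1) this]
  have tangent1: "tangent_to_line I1 r1 (line P Q) \<longleftrightarrow> infdist I1 (line P Q) = infdist I1 (line A B)"
    if "P \<noteq> Q" for P Q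
    using tangent_to_line_iff_infdist[OF that \<open>r1 \<ge> 0\<close>] r1 by simp
  have tangent2: "tangent_to_line I2 r2 (line P Q) \<longleftrightarrow> infdist I2 (line P Q) = infdist I2 (line B C)"
    if "P \<noteq> Q" for P Q
    using tangent_to_line_iff_infdist[OF that \<open>r2 \<ge> 0\<close>] r2 by simp
  show ?thesis
    using sides1 sides2 \<open>A \<noteq> B\<close> \<open>B \<noteq> C\<close> \<open>C \<noteq> D\<close> \<open>D \<noteq> A\<close>
    by (simp add: tangent1 tangent2)
qed

end
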